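(* For positive semidefinite operators $A,B$ on a finite-dimensional Hilbert space, $$\operatorname{tr}\Big[A\,\frac{B}{A+B}\Big]\le\frac12\big(\operatorname{tr}[A+B]-\|A-B\|_1\big).$$
   Context: For positive semidefinite $X,C$ with the support of $X$ contained in the support of $C$, the matrix quotient is $\frac{X}{C}:=\int_0^\infty(\lambda+C)^{-1}X(\lambda+C)^{-1}\,d\lambda$ (for $C>0$ this is the definition; here $C=A+B$, whose support contains that of $B$, so the integral converges). $\|\cdot\|_1$ denotes the trace norm. *)

theory Defs
  imports "HOL-Analysis.Analysis" "HOL-Library.Complex_Order"
begin

text \<open>Operators on a finite-dimensional (complex) Hilbert space are represented as
  complex square matrices indexed by an arbitrary finite type 'n.\<close>

definition adjoint :: "complex^'n^'n \<Rightarrow> complex^'n^'n" where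
  "adjoint A = (\<chi> i j. cnj (A $ j $ i))"

definition cinner :: "complex^'n \<Rightarrow> complex^'n \<Rightarrow> complex" where
  "cinner x y = (\<Sum>i\<in>UNIV. cnj (x $ i) * y $ i)"

definition psd :: "complex^'n^'n \<Rightarrow> bool" where
  "psd A \<longleftrightarrow> adjoint A = A \<and> (\<forall>x. 0 \<le> cinner x (A *v x))"

definition matrix_quotient :: "complex^'n^'n \<Rightarrow> complex^'n^'n \<Rightarrow> complex^'n^'n" where
  "matrix_quotient X C =
     integral {0<..} (\<lambda>l::real. matrix_inv (mat (complex_of_real l) + C) ** X
                                 ** matrix_inv (mat (complex_of_real l) + C))"

definition trace_norm :: "complex^'n^'n \<Rightarrow> real" where
  "trace_norm X = Re (trace (THE S. psd S \<and> S ** S = adjoint X ** X))"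

end

(* Diagonalise A + B = U diag(c) U^*. In this basis the matrix quotient B/(A + B) is the Schur
   product of B with the kernel K i k = int_0^oo dl / ((l + c i) (l + c k)), and B = diag c - A,
   so tr[A B/(A + B)] = sum_i a_ii - sum_ik K i k |a_ik|^2. On the other side
   ||A - B||_1 = tr[(A - B)(2 P - 1)] for the spectral projection P onto the nonnegative part of
   A - B, which turns the right-hand side into
   sum_i a_ii - 2 sum_ik Re (a_ik cnj p_ik) + sum_ik (c i + c k)/2 |p_ik|^2.
   Comparing the integrands gives K i k >= 2 / (c i + c k), and then each term obeys
   2 Re (a cnj p) <= K |a|^2 + (c i + c k)/2 |p|^2 by AM-GM. *)

theory Submission
  imports Defs
begin

definition diag :: "('n \<Rightarrow> complex) \<Rightarrow> complex^'n^'n" where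
  "diag d = (\<chi> i j. if i = j then d i else 0)"

definition hermitian :: "complex^'n^'n \<Rightarrow> bool" where
  "hermitian A \<longleftrightarrow> adjoint A = A"

definition unitary :: "complex^'n^'n \<Rightarrow> bool" where
  "unitary U \<longleftrightarrow> adjoint U ** U = mat 1"

lemma diag_nth [simp]: "diag d $ i $ j = (if i = j then d i else 0)"
  by (simp add: diag_def)

lemma adjoint_nth [simp]: "adjoint A $ i $ j = cnj (A $ j $ i)"
  by (simp add: adjoint_def)

lemma adjoint_adjoint [simp]: "adjoint (adjoint A) = A"
  by (simp add: vec_eq_iff)

lemma adjoint_matrix_mul: "adjoint (A ** B) = adjoint B ** adjoint A"
  by (simp add: vec_eq_iff matrix_matrix_mult_def mult.commute)

lemma adjoint_add: "adjoint (A + B) = adjoint A + adjoint B"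
  by (simp add: vec_eq_iff)

lemma adjoint_diff: "adjoint (A - B) = adjoint A - adjoint B"
  by (simp add: vec_eq_iff)

lemma adjoint_mat_of_real [simp]: "adjoint (mat (complex_of_real r)) = mat (complex_of_real r)"
  by (simp add: vec_eq_iff mat_def)

lemma adjoint_mat_1 [simp]: "adjoint (mat 1) = mat 1"
  by (simp add: vec_eq_iff mat_def)

lemma adjoint_diag_of_real [simp]:
  "adjoint (diag (\<lambda>i. complex_of_real (d i))) = diag (\<lambda>i. complex_of_real (d i))"
  by (simp add: vec_eq_iff)

lemma hermitian_diff: "hermitian A \<Longrightarrow> hermitian B \<Longrightarrow> hermitian (A - B)"
  by (simp add: hermitian_def adjoint_diff)

lemma hermitian_unitary_diag: "hermitian (U ** diag (\<lambda>i. complex_of_real (d i)) ** adjoint U)"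
  by (simp add: hermitian_def adjoint_matrix_mul matrix_mul_assoc)

lemma hermitian_adjoint_conj: "hermitian A \<Longrightarrow> hermitian (adjoint U ** A ** U)"
  by (simp add: hermitian_def adjoint_matrix_mul matrix_mul_assoc)

lemma hermitian_nth: "hermitian A \<Longrightarrow> A $ j $ i = cnj (A $ i $ j)"
  by (metis adjoint_nth hermitian_def)

lemma unitary_right_inverse: "unitary U \<Longrightarrow> U ** adjoint U = mat 1"
  by (simp add: unitary_def matrix_left_right_inverse)

lemma unitary_adjoint: "unitary U \<Longrightarrow> unitary (adjoint U)"
  by (simp add: unitary_def unitary_right_inverse)

lemma matrix_add_rdistrib: "((A::'a::semiring_1^'n^'m) + B) ** C = A ** C + B ** C"
  by (simp add: vec_eq_iff matrix_matrix_mult_def distrib_right sum.distrib)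

lemma matrix_diff_ldistrib: "(C::'a::ring_1^'n^'m) ** (A - B) = C ** A - C ** B"
  by (simp add: vec_eq_iff matrix_matrix_mult_def right_diff_distrib sum_subtractf)

lemma matrix_diff_rdistrib: "((A::'a::ring_1^'n^'m) - B) ** C = A ** C - B ** C"
  by (simp add: vec_eq_iff matrix_matrix_mult_def left_diff_distrib sum_subtractf)

lemma mat_matrix_vector_mult: "mat c *v x = c *s x"
  by (simp add: vec_eq_iff matrix_vector_mult_def mat_def if_distrib if_distribR cong: if_cong)

lemma matrix_vector_mult_scale: "(A::complex^'n^'m) *v (c *s x) = c *s (A *v x)"
  by (simp add: matrix_vector_mult_def vec_eq_iff sum_distrib_left algebra_simps)

lemma diag_mult: "diag a ** diag b = diag (\<lambda>i. a i * b i)"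
  by (simp add: vec_eq_iff matrix_matrix_mult_def if_distrib[where f="\<lambda>x. x * _"] sum.delta cong: if_cong)

lemma trace_diag: "trace (diag a) = sum a UNIV"
  by (simp add: trace_def)

lemma trace_matrix_mul: "trace (A ** B) = (\<Sum>i\<in>UNIV. \<Sum>k\<in>UNIV. A $ i $ k * B $ k $ i)"
  by (simp add: trace_def matrix_matrix_mult_def)

lemma unitary_conj_mult:
  assumes "unitary V"
  shows "(V ** A ** adjoint V) ** (V ** B ** adjoint V) = V ** (A ** B) ** adjoint V"
proof -
  have "(V ** A ** adjoint V) ** (V ** B ** adjoint V) = V ** A ** (adjoint V ** V) ** B ** adjoint V"
    by (simp add: matrix_mul_assoc)
  also have "\<dots> = V ** (A ** B) ** adjoint V"
    using assms by (simp add: unitary_def matrix_mul_assoc)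
  finally show ?thesis .
qed

lemma unitary_conj_cancel:
  assumes "unitary U"
  shows "adjoint U ** (U ** D ** adjoint U) ** U = D"
proof -
  have "adjoint U ** (U ** D ** adjoint U) ** U = (adjoint U ** U) ** D ** (adjoint U ** U)"
    by (simp add: matrix_mul_assoc)
  then show ?thesis
    using assms by (simp add: unitary_def)
qed

lemma trace_unitary_conj:
  assumes "unitary V"
  shows "trace (V ** A ** adjoint V) = trace A"
proof -
  have "trace (V ** A ** adjoint V) = trace (A ** adjoint V ** V)"
    by (metis matrix_mul_assoc trace_mul_sym)
  then show ?thesis
    using assms by (simp add: unitary_def matrix_mul_assoc[symmetric])
qed

lemma cinner_add_right: "cinner x (y + z) = cinner x y + cinner x z"
  by (simp add: cinner_def algebra_simps sum.distrib)

lemma cinner_add_left: "cinner (x + y) z = cinner x z + cinner y z"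
  by (simp add: cinner_def algebra_simps sum.distrib)

lemma cinner_diff_right: "cinner x (y - z) = cinner x y - cinner x z"
  by (simp add: cinner_def algebra_simps sum_subtractf)

lemma cinner_scale_right: "cinner x (c *s y) = c * cinner x y"
  by (simp add: cinner_def sum_distrib_left algebra_simps)

lemma cinner_scale_left: "cinner (c *s x) y = cnj c * cinner x y"
  by (simp add: cinner_def sum_distrib_left algebra_simps)

lemma cinner_commute: "cinner x y = cnj (cinner y x)"
  by (simp add: cinner_def mult.commute)

lemma cinner_zero_right [simp]: "cinner x 0 = 0"
  by (simp add: cinner_def)

lemma cinner_sum_right: "cinner x (sum f S) = (\<Sum>s\<in>S. cinner x (f s))"
  by (simp add: cinner_def sum_distrib_left sum_component; subst sum.swap; simp)

lemma cinner_adjoint: "cinner x (A *v y) = cinner (adjoint A *v x) y"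
  unfolding cinner_def matrix_vector_mult_def
  by (simp add: sum_distrib_left sum_distrib_right algebra_simps; subst sum.swap; simp add: algebra_simps)

lemma cinner_self: "cinner x x = complex_of_real ((norm x)\<^sup>2)"
proof -
  have "cinner x x = complex_of_real (\<Sum>i\<in>UNIV. (norm (x $ i))\<^sup>2)"
    unfolding cinner_def of_real_sum
    by (intro sum.cong refl) (metis complex_norm_square mult.commute)
  also have "(\<Sum>i\<in>UNIV. (norm (x $ i))\<^sup>2) = (norm x)\<^sup>2"
    by (simp add: norm_vec_def L2_set_def sum_nonneg)
  finally show ?thesis .
qed

lemma cinner_self_eq_0 [simp]: "cinner x x = 0 \<longleftrightarrow> x = 0"
  by (simp add: cinner_self)

lemma continuous_on_cinner_right: "continuous_on S (\<lambda>x. cinner a x)"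
  unfolding cinner_def by (intro continuous_intros)

lemma continuous_on_quadratic_form: "continuous_on S (\<lambda>x. Re (cinner x (H *v x)))"
  unfolding cinner_def matrix_vector_mult_def by (intro continuous_intros)

lemma norm_vector_scale: "norm (c *s (x::complex^'n)) = norm c * norm x"
proof -
  have "complex_of_real ((norm (c *s x))\<^sup>2) = complex_of_real ((norm c * norm x)\<^sup>2)"
    unfolding cinner_self[symmetric] cinner_scale_left cinner_scale_right
    by (simp add: cinner_self power_mult_distrib complex_norm_square[symmetric])
  then have "(norm (c *s x))\<^sup>2 = (norm c * norm x)\<^sup>2"
    by (simp only: of_real_eq_iff)
  then show ?thesis
    by (simp add: power2_eq_iff_nonneg)
qed

lemma hermitian_cinner: "hermitian H \<Longrightarrow> cinner x (H *v y) = cinner (H *v x) y"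
  by (metis cinner_adjoint hermitian_def)

lemma hermitian_quadratic_form_real: "hermitian H \<Longrightarrow> Im (cinner x (H *v x)) = 0"
  by (metis cinner_commute hermitian_cinner complex_cnj_cancel_iff Reals_cnj_iff complex_is_Real_iff)

section \<open>Spectral theorem for Hermitian matrices\<close>

lemma nonneg_quadratic_linear_coeff_eq_0:
  fixes \<beta> \<gamma> :: real
  assumes "\<And>t. 0 \<le> 2 * t * \<beta> + t\<^sup>2 * \<gamma>"
  shows "\<beta> = 0"
proof (rule ccontr)
  assume "\<beta> \<noteq> 0"
  define m where "m = \<bar>\<gamma>\<bar> + 1"
  have m: "m > 0" "\<gamma> \<le> m - 1"
    unfolding m_def by auto
  define t where "t = - \<beta> / m"
  have "t\<^sup>2 * \<gamma> \<le> t\<^sup>2 * (m - 1)"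
    using m by (intro mult_left_mono) auto
  moreover have "2 * t * \<beta> + t\<^sup>2 * (m - 1) = - (\<beta>\<^sup>2 * (m + 1) / m\<^sup>2)"
    unfolding t_def using m by (simp add: field_simps power2_eq_square)
  moreover have "0 < \<beta>\<^sup>2 * (m + 1) / m\<^sup>2"
    using \<open>\<beta> \<noteq> 0\<close> m by simp
  ultimately show False
    using assms[of t] by linarith
qed

text \<open>Expand the form at \<open>x + t y\<close> and \<open>x + t \<i> y\<close> for real \<open>t\<close>: nonnegativity forces the
  term linear in \<open>t\<close> to vanish.\<close>

lemma hermitian_form_radical:
  fixes L :: "complex^'n^'n"
  assumes "hermitian L"
    and add: "\<And>u v. u \<in> W \<Longrightarrow> v \<in> W \<Longrightarrow> u + v \<in> W"
    and scale: "\<And>u c. u \<in> W \<Longrightarrow> c *s u \<in> W"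
    and nonneg: "\<And>z. z \<in> W \<Longrightarrow> 0 \<le> Re (cinner z (L *v z))"
    and x: "x \<in> W" "Re (cinner x (L *v x)) = 0"
    and y: "y \<in> W"
  shows "cinner y (L *v x) = 0"
proof -
  have Re_0: "Re (cinner u (L *v x)) = 0" if "u \<in> W" for u
  proof (rule nonneg_quadratic_linear_coeff_eq_0)
    fix t :: real
    have "cinner x (L *v u) = cnj (cinner u (L *v x))"
      by (metis hermitian_cinner[OF \<open>hermitian L\<close>] cinner_commute)
    then have "Re (cinner (x + of_real t *s u) (L *v (x + of_real t *s u)))
        = 2 * t * Re (cinner u (L *v x)) + t\<^sup>2 * Re (cinner u (L *v u))"
      using x(2)
      by (simp add: matrix_vector_right_distrib matrix_vector_mult_scale cinner_add_left
          cinner_add_right cinner_scale_left cinner_scale_right power2_eq_square algebra_simps)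
    moreover have "x + of_real t *s u \<in> W"
      using x(1) that add scale by blast
    ultimately show "0 \<le> 2 * t * Re (cinner u (L *v x)) + t\<^sup>2 * Re (cinner u (L *v u))"
      using nonneg by metis
  qed
  have "Im (cinner y (L *v x)) = Re (cinner (\<i> *s y) (L *v x))"
    by (simp add: cinner_scale_left)
  then show ?thesis
    using Re_0[OF y] Re_0[OF scale[OF y]] by (simp add: complex_eq_iff)
qed

lemma exists_orthogonal_to_orthonormal:
  fixes v :: "'n \<Rightarrow> complex^'n"
  assumes orthonormal: "\<forall>i\<in>I. \<forall>j\<in>I. cinner (v i) (v j) = (if i = j then 1 else 0)"
    and "I \<noteq> UNIV"
  shows "\<exists>w. w \<noteq> 0 \<and> (\<forall>i\<in>I. cinner (v i) w = 0)"
proof (rule ccontr)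
  assume no_orthogonal: "\<not> ?thesis"
  define e :: "'n \<Rightarrow> complex^'n" where "e k = axis k 1" for k
  have cinner_e: "cinner x (e k) = cnj (x $ k)" for x k
    unfolding cinner_def e_def axis_def by (simp add: if_distrib cong: if_cong)
  txt \<open>Otherwise every \<open>e k\<close> lies in the span of the \<open>v i\<close>, and summing \<open>|v i $ k|\<^sup>2\<close> over
    \<open>i\<close> and \<open>k\<close> in both orders gives \<open>card I = CARD('n)\<close>.\<close>
  define w where "w k = e k - (\<Sum>i\<in>I. cinner (v i) (e k) *s v i)" for k
  have "cinner (v m) (w k) = 0" if "m \<in> I" for m k
  proof -
    have "(\<Sum>i\<in>I. cinner (v i) (e k) * cinner (v m) (v i)) = (\<Sum>i\<in>I. if i = m then cinner (v i) (e k) else 0)"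
      using orthonormal that by (intro sum.cong refl) auto
    then show ?thesis
      using that by (simp add: w_def cinner_diff_right cinner_sum_right cinner_scale_right)
  qed
  then have "w k = 0" for k
    using no_orthogonal by blast
  moreover have "w k $ k = 1 - (\<Sum>i\<in>I. cnj (v i $ k) * v i $ k)" for k
    by (simp add: w_def cinner_e sum_component) (simp add: e_def)
  ultimately have "(\<Sum>i\<in>I. cnj (v i $ k) * v i $ k) = 1" for k
    by (metis right_minus_eq zero_index)
  then have "of_nat CARD('n) = (\<Sum>k\<in>UNIV. \<Sum>i\<in>I. cnj (v i $ k) * v i $ k :: complex)"
    by simp
  also have "\<dots> = (\<Sum>i\<in>I. cinner (v i) (v i))"
    unfolding cinner_def by (rule sum.swap)
  also have "\<dots> = of_nat (card I)"
    using orthonormal by simp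
  finally have "CARD('n) = card I"
    by (metis of_nat_eq_iff)
  moreover have "card I < CARD('n)"
    using \<open>I \<noteq> UNIV\<close> by (simp add: psubsetI psubset_card_mono)
  ultimately show False
    by simp
qed

lemma quadratic_form_max_on_subspace:
  fixes H :: "complex^'n^'n"
  assumes "closed W" and scale: "\<And>u c. u \<in> W \<Longrightarrow> c *s u \<in> W" and "w \<in> W" "w \<noteq> 0"
  obtains x where "x \<in> W" "norm x = 1"
    "\<And>z. z \<in> W \<Longrightarrow> Re (cinner z (H *v z)) \<le> Re (cinner x (H *v x)) * (norm z)\<^sup>2"
proof -
  define q where "q x = Re (cinner x (H *v x))" for x
  define S where "S = sphere 0 1 \<inter> W"
  have normalize: "complex_of_real (1 / norm z) *s z \<in> S" if "z \<in> W" "z \<noteq> 0" for z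
    using that scale by (simp add: S_def norm_vector_scale norm_divide)
  have "compact S"
    unfolding S_def using \<open>closed W\<close> by (intro compact_Int_closed compact_sphere)
  moreover have "S \<noteq> {}"
    using normalize[OF \<open>w \<in> W\<close> \<open>w \<noteq> 0\<close>] by blast
  ultimately obtain x where x: "x \<in> S" and x_max: "\<And>y. y \<in> S \<Longrightarrow> q y \<le> q x"
    using continuous_attains_sup[of S q] continuous_on_quadratic_form unfolding q_def by blast
  have "q z \<le> q x * (norm z)\<^sup>2" if "z \<in> W" for z
  proof (cases "z = 0")
    case True
    then show ?thesis by (simp add: q_def)
  next
    case False
    have "q z = (norm z)\<^sup>2 * q (complex_of_real (1 / norm z) *s z)"
      using False
      by (simp add: q_def cinner_scale_left cinner_scale_right matrix_vector_mult_scale power2_eq_square)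
    also have "\<dots> \<le> (norm z)\<^sup>2 * q x"
      by (intro mult_left_mono x_max normalize that False) simp
    finally show ?thesis
      by (simp add: mult.commute)
  qed
  moreover have "x \<in> W" "norm x = 1"
    using x by (auto simp: S_def)
  ultimately show ?thesis
    using that unfolding q_def by blast
qed

lemma closed_orthogonal_complement: "closed {x. \<forall>i\<in>I. cinner (v i) x = 0}"
proof -
  have "{x. \<forall>i\<in>I. cinner (v i) x = 0} = (\<Inter>i\<in>I. {x. cinner (v i) x = 0})"
    by auto
  then show ?thesis
    by (simp add: closed_INT closed_Collect_eq continuous_on_cinner_right)
qed

lemma hermitian_orthogonal_complement_invariant:
  assumes "hermitian L" "\<forall>i\<in>I. L *v v i = complex_of_real (\<mu> i) *s v i"
    and "\<forall>i\<in>I. cinner (v i) x = 0"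
  shows "\<forall>i\<in>I. cinner (v i) (L *v x) = 0"
proof
  fix i
  assume "i \<in> I"
  have "cinner (v i) (L *v x) = cinner (L *v v i) x"
    by (rule hermitian_cinner[OF \<open>hermitian L\<close>])
  then show "cinner (v i) (L *v x) = 0"
    using assms(2,3) \<open>i \<in> I\<close> by (simp add: cinner_scale_left)
qed

text \<open>The maximum \<open>l\<close> of the quadratic form of \<open>H\<close> on unit vectors of the orthogonal complement
  \<open>W\<close> of known eigenvectors is attained at an eigenvector: \<open>mat l - H\<close> is nonnegative on \<open>W\<close>,
  vanishes at the maximiser \<open>x\<close> and maps \<open>W\<close> into itself, so \<open>(mat l - H) x\<close> is orthogonal to itself.\<close>

lemma hermitian_eigenvector_orthogonal:
  fixes v :: "'n \<Rightarrow> complex^'n" and H :: "complex^'n^'n"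
  assumes "hermitian H"
    and orthonormal: "\<forall>i\<in>I. \<forall>j\<in>I. cinner (v i) (v j) = (if i = j then 1 else 0)"
    and eigen: "\<forall>i\<in>I. H *v v i = complex_of_real (d i) *s v i"
    and "I \<noteq> UNIV"
  shows "\<exists>w l. cinner w w = 1 \<and> (\<forall>i\<in>I. cinner (v i) w = 0) \<and> H *v w = complex_of_real l *s w"
proof -
  define W where "W = {x. \<forall>i\<in>I. cinner (v i) x = 0}"
  have add: "x + y \<in> W" if "x \<in> W" "y \<in> W" for x y
    using that by (simp add: W_def cinner_add_right)
  have scale: "c *s x \<in> W" if "x \<in> W" for x c
    using that by (simp add: W_def cinner_scale_right)
  have "closed W"
    unfolding W_def by (rule closed_orthogonal_complement)
  moreover obtain w where "w \<in> W" "w \<noteq> 0"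
    using exists_orthogonal_to_orthonormal[OF orthonormal \<open>I \<noteq> UNIV\<close>] by (auto simp: W_def)
  ultimately obtain x where x: "x \<in> W" "norm x = 1"
    and x_max: "\<And>z. z \<in> W \<Longrightarrow> Re (cinner z (H *v z)) \<le> Re (cinner x (H *v x)) * (norm z)\<^sup>2"
    using quadratic_form_max_on_subspace[of W] scale by blast
  define l where "l = Re (cinner x (H *v x))"
  define L where "L = mat (complex_of_real l) - H"
  have L_apply: "L *v z = complex_of_real l *s z - H *v z" for z
    by (simp add: L_def matrix_vector_mult_diff_rdistrib mat_matrix_vector_mult)
  have form_L: "Re (cinner z (L *v z)) = l * (norm z)\<^sup>2 - Re (cinner z (H *v z))" for z
    by (simp add: L_apply cinner_diff_right cinner_scale_right cinner_self)
  have "hermitian L"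
    using \<open>hermitian H\<close> by (simp add: L_def hermitian_def adjoint_diff)
  moreover have "L *v x \<in> W"
  proof -
    have "\<forall>i\<in>I. L *v v i = complex_of_real (l - d i) *s v i"
      using eigen by (simp add: L_apply vec_eq_iff algebra_simps)
    then show ?thesis
      using hermitian_orthogonal_complement_invariant[OF \<open>hermitian L\<close>, of I v "\<lambda>i. l - d i" x] x(1)
      by (simp add: W_def)
  qed
  ultimately have "cinner (L *v x) (L *v x) = 0"
    using hermitian_form_radical[of L W x "L *v x"] add scale x x_max
    by (simp add: form_L l_def)
  then have "H *v x = complex_of_real l *s x"
    by (simp add: L_apply)
  moreover have "cinner x x = 1"
    using x(2) by (simp add: cinner_self)
  ultimately show ?thesis
    using x(1) unfolding W_def by blast
qed

lemma hermitian_orthonormal_eigenbasis: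
  fixes H :: "complex^'n^'n"
  assumes "hermitian H"
  shows "\<exists>(v::'n \<Rightarrow> complex^'n) d. (\<forall>i j. cinner (v i) (v j) = (if i = j then 1 else 0)) \<and>
           (\<forall>i. H *v v i = complex_of_real (d i) *s v i)"
proof -
  have "\<exists>(v::'n \<Rightarrow> complex^'n) d. (\<forall>i\<in>I. \<forall>j\<in>I. cinner (v i) (v j) = (if i = j then 1 else 0)) \<and>
          (\<forall>i\<in>I. H *v v i = complex_of_real (d i) *s v i)" for I :: "'n set"
  proof (induction I rule: finite_induct[OF finite])
    case 1
    then show ?case by auto
  next
    case (2 j I)
    then obtain v d
      where orthonormal: "\<forall>i\<in>I. \<forall>j\<in>I. cinner (v i) (v j) = (if i = j then 1 else 0)"
        and eigen: "\<forall>i\<in>I. H *v v i = complex_of_real (d i) *s v i"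
      by blast
    have "I \<noteq> UNIV"
      using 2 by auto
    then obtain w l
      where w: "cinner w w = 1" "\<forall>i\<in>I. cinner (v i) w = 0" "H *v w = complex_of_real l *s w"
      using hermitian_eigenvector_orthogonal[OF assms orthonormal eigen] by blast
    have w_orthogonal: "\<forall>i\<in>I. cinner w (v i) = 0"
      using w(2) cinner_commute[of w] by simp
    show ?case
      by (rule exI[of _ "v(j := w)"], rule exI[of _ "d(j := l)"])
        (use orthonormal eigen w w_orthogonal \<open>j \<notin> I\<close> in auto)
  qed
  from this[of UNIV] show ?thesis
    by auto
qed

theorem hermitian_unitary_diagonalization:
  fixes H :: "complex^'n^'n"
  assumes "hermitian H"
  obtains U d where "unitary U" "H = U ** diag (\<lambda>i. complex_of_real (d i)) ** adjoint U"
proof -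
  obtain v :: "'n \<Rightarrow> complex^'n" and d
    where orthonormal: "\<forall>i j. cinner (v i) (v j) = (if i = j then 1 else 0)"
      and eigen: "\<forall>i. H *v v i = complex_of_real (d i) *s v i"
    using hermitian_orthonormal_eigenbasis[OF assms] by blast
  define U :: "complex^'n^'n" where "U = (\<chi> r c. v c $ r)"
  have "unitary U"
    using orthonormal by (simp add: unitary_def vec_eq_iff matrix_matrix_mult_def U_def mat_def cinner_def)
  have "(H ** U) $ r $ c = (H *v v c) $ r" for r c
    by (simp add: matrix_matrix_mult_def matrix_vector_mult_def U_def)
  then have HU: "H ** U = U ** diag (\<lambda>i. complex_of_real (d i))"
    using eigen
    by (simp add: vec_eq_iff matrix_matrix_mult_def U_def if_distrib if_distribR mult.commute cong: if_cong)
  have "H = H ** (U ** adjoint U)"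
    by (simp add: unitary_right_inverse[OF \<open>unitary U\<close>])
  also have "\<dots> = U ** diag (\<lambda>i. complex_of_real (d i)) ** adjoint U"
    by (simp add: matrix_mul_assoc HU)
  finally show ?thesis
    using that \<open>unitary U\<close> by blast
qed

section \<open>Positive semidefinite matrices\<close>

lemma psd_hermitian: "psd A \<Longrightarrow> hermitian A"
  by (simp add: psd_def hermitian_def)

lemma psd_iff_Re: "psd A \<longleftrightarrow> hermitian A \<and> (\<forall>x. 0 \<le> Re (cinner x (A *v x)))"
  unfolding psd_def hermitian_def less_eq_complex_def
  using hermitian_quadratic_form_real[unfolded hermitian_def] by auto

lemma psd_add: "psd A \<Longrightarrow> psd B \<Longrightarrow> psd (A + B)"
  unfolding psd_iff_Re hermitian_def
  by (simp add: adjoint_add matrix_vector_mult_add_rdistrib cinner_add_right)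

lemma cinner_adjoint_conj: "cinner x ((adjoint U ** A ** U) *v x) = cinner (U *v x) (A *v (U *v x))"
  by (metis cinner_adjoint adjoint_adjoint matrix_vector_mul_assoc)

lemma psd_adjoint_conj:
  assumes "psd A"
  shows "psd (adjoint U ** A ** U)"
  using assms hermitian_adjoint_conj[OF psd_hermitian[OF assms]]
  by (simp add: psd_iff_Re cinner_adjoint_conj)

lemma psd_mat_1: "psd (mat 1)"
  by (simp add: psd_iff_Re hermitian_def cinner_self)

lemma psd_diag:
  assumes "\<forall>i. 0 \<le> d i"
  shows "psd (diag (\<lambda>i. complex_of_real (d i)))"
proof -
  have "cinner x (diag (\<lambda>i. complex_of_real (d i)) *v x)
      = (\<Sum>i\<in>UNIV. complex_of_real (d i * (norm (x $ i))\<^sup>2))" for x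
    unfolding cinner_def matrix_vector_mult_def
    by (intro sum.cong refl)
      (simp add: if_distrib if_distribR cong: if_cong, metis complex_norm_square mult.commute of_real_power)
  then show ?thesis
    using assms by (simp add: psd_iff_Re hermitian_def sum_nonneg)
qed

lemma psd_unitary_diag:
  assumes "\<forall>i. 0 \<le> d i"
  shows "psd (V ** diag (\<lambda>i. complex_of_real (d i)) ** adjoint V)"
  using psd_adjoint_conj[OF psd_diag[OF assms], of "adjoint V"] by simp

lemma psd_kernel:
  assumes "psd A" "Re (cinner x (A *v x)) = 0"
  shows "A *v x = 0"
  using hermitian_form_radical[of A UNIV x "A *v x"] assms
  by (simp add: psd_iff_Re)

lemma cinner_axis_matrix: "cinner (axis k 1) (A *v axis k 1) = A $ k $ k"
  unfolding cinner_def axis_def matrix_vector_mult_def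
  by (simp add: if_distrib if_distribR cong: if_cong)

lemma matrix_vector_mult_axis_nth: "(A *v axis k 1) $ i = A $ i $ k"
  unfolding axis_def matrix_vector_mult_def
  by (simp add: if_distrib if_distribR cong: if_cong)

lemma psd_diag_nonneg: "psd A \<Longrightarrow> 0 \<le> Re (A $ k $ k)"
  using cinner_axis_matrix[of k A] by (metis psd_iff_Re)

lemma psd_diag_eq_0:
  assumes "psd A" "Re (A $ k $ k) = 0"
  shows "A $ i $ k = 0" "A $ k $ i = 0"
proof -
  have "A *v axis k 1 = 0"
    using psd_kernel[OF assms(1)] assms(2) by (simp add: cinner_axis_matrix)
  then show "A $ i $ k = 0"
    by (metis matrix_vector_mult_axis_nth zero_index)
  moreover have "A $ k $ i = cnj (A $ i $ k)"
    by (rule hermitian_nth[OF psd_hermitian[OF assms(1)]])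
  ultimately show "A $ k $ i = 0"
    by simp
qed

lemma psd_trace_nonneg: "psd A \<Longrightarrow> 0 \<le> Re (trace A)"
  unfolding trace_def Re_sum by (intro sum_nonneg psd_diag_nonneg)

lemma psd_trace_eq_0:
  assumes "psd A" "Re (trace A) = 0"
  shows "A = 0"
proof -
  have "(\<Sum>k\<in>UNIV. Re (A $ k $ k)) = 0"
    using assms(2) by (simp add: trace_def Re_sum)
  then have "Re (A $ k $ k) = 0" for k
    using psd_diag_nonneg[OF assms(1)] by (simp add: sum_nonneg_eq_0_iff)
  then have "A $ i $ k = 0" for i k
    using psd_diag_eq_0[OF assms(1)] by blast
  then show ?thesis
    by (simp add: vec_eq_iff)
qed

lemma psd_sandwich_eq_0:
  assumes "psd S" "hermitian D" "D ** S ** D = 0"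
  shows "S ** D = 0"
proof -
  have "Re (cinner (D *v x) (S *v (D *v x))) = 0" for x
  proof -
    have "cinner (D *v x) (S *v (D *v x)) = cinner x ((adjoint D ** S ** D) *v x)"
      by (rule cinner_adjoint_conj[symmetric])
    then show ?thesis
      using assms(2,3) by (simp add: hermitian_def)
  qed
  then have "S *v (D *v x) = 0" for x
    using psd_kernel[OF assms(1)] by blast
  then show ?thesis
    by (metis matrix_eq matrix_vector_mul_assoc matrix_vector_mult_0)
qed

text \<open>If \<open>S\<^sup>2 = T\<^sup>2\<close>, then \<open>D = S - T\<close> anticommutes with \<open>S + T\<close>, so
  \<open>tr (D S D) + tr (D T D) = tr (D (S + T) D) = 0\<close>; both traces are nonnegative, which forces
  \<open>S D = T D = 0\<close> and hence \<open>D\<^sup>2 = 0\<close>.\<close>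

lemma psd_sqrt_unique:
  assumes S: "psd S" and T: "psd T" and eq: "S ** S = T ** T"
  shows "S = T"
proof -
  define D where "D = S - T"
  define E where "E = S + T"
  have "hermitian D"
    using S T unfolding D_def by (intro hermitian_diff psd_hermitian)
  have anticommute: "E ** D + D ** E = 0"
    unfolding D_def E_def using eq
    by (simp add: matrix_add_ldistrib matrix_add_rdistrib matrix_diff_ldistrib matrix_diff_rdistrib)
  have "trace (D ** E ** D) + trace (D ** E ** D) = trace (D ** E ** D) + trace (D ** D ** E)"
    by (metis matrix_mul_assoc trace_mul_sym)
  also have "\<dots> = trace (D ** (E ** D + D ** E))"
    by (simp add: matrix_add_ldistrib trace_add matrix_mul_assoc)
  also have "\<dots> = 0"
    by (simp only: anticommute) (simp add: trace_def matrix_matrix_mult_def)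
  finally have "trace (D ** E ** D) = 0"
    by simp
  then have "trace (D ** S ** D) + trace (D ** T ** D) = 0"
    by (simp add: E_def matrix_add_ldistrib matrix_add_rdistrib trace_add)
  then have "Re (trace (D ** S ** D)) + Re (trace (D ** T ** D)) = 0"
    by (metis plus_complex.sel(1) zero_complex.sel(1))
  moreover have "psd (D ** S ** D)" "psd (D ** T ** D)"
    using psd_adjoint_conj[OF S, of D] psd_adjoint_conj[OF T, of D] \<open>hermitian D\<close>
    by (simp_all add: hermitian_def)
  ultimately have "Re (trace (D ** S ** D)) = 0" "Re (trace (D ** T ** D)) = 0"
    using psd_trace_nonneg by (smt (verit))+
  then have "D ** S ** D = 0" "D ** T ** D = 0"
    using psd_trace_eq_0 \<open>psd (D ** S ** D)\<close> \<open>psd (D ** T ** D)\<close> by blast+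
  then have "S ** D = 0" "T ** D = 0"
    using psd_sandwich_eq_0[OF S \<open>hermitian D\<close>] psd_sandwich_eq_0[OF T \<open>hermitian D\<close>] by blast+
  then have "D ** mat 1 ** D = 0"
    by (simp add: D_def matrix_diff_rdistrib)
  then have "mat 1 ** D = 0"
    by (rule psd_sandwich_eq_0[OF psd_mat_1 \<open>hermitian D\<close>])
  then show ?thesis
    by (simp add: D_def)
qed

section \<open>The trace norm of a Hermitian matrix\<close>

lemma trace_norm_unitary_diag:
  assumes "unitary V"
  shows "trace_norm (V ** diag (\<lambda>i. complex_of_real (x i)) ** adjoint V) = (\<Sum>i\<in>UNIV. \<bar>x i\<bar>)"
proof -
  define X where "X = V ** diag (\<lambda>i. complex_of_real (x i)) ** adjoint V"
  define S where "S = V ** diag (\<lambda>i. complex_of_real \<bar>x i\<bar>) ** adjoint V"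
  have "psd S"
    unfolding S_def by (rule psd_unitary_diag) simp
  have "(\<lambda>i. complex_of_real \<bar>x i\<bar> * complex_of_real \<bar>x i\<bar>) = (\<lambda>i. complex_of_real (x i) * complex_of_real (x i))"
    by (rule ext) (metis abs_mult_self_eq of_real_mult)
  then have square: "S ** S = adjoint X ** X"
    using hermitian_unitary_diag[of V x]
    by (simp add: S_def X_def hermitian_def unitary_conj_mult[OF assms] diag_mult)
  have "(THE S. psd S \<and> S ** S = adjoint X ** X) = S"
  proof (rule the_equality)
    show "psd S \<and> S ** S = adjoint X ** X"
      using \<open>psd S\<close> square by blast
  next
    fix S' assume "psd S' \<and> S' ** S' = adjoint X ** X"
    then show "S' = S"
      using psd_sqrt_unique[OF _ \<open>psd S\<close>] square by auto
  qed
  then show ?thesis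
    by (simp add: trace_norm_def X_def S_def trace_unitary_conj[OF assms] trace_diag)
qed

text \<open>\<open>P\<close> is the spectral projection of \<open>X\<close> onto its nonnegative eigenvalues, so that \<open>2 P - 1\<close>
  is the sign of \<open>X\<close>.\<close>

lemma trace_norm_eq_projection:
  assumes "hermitian X"
  obtains P where "hermitian P" "P ** P = P" "trace_norm X = Re (2 * trace (X ** P) - trace X)"
proof -
  obtain V x where "unitary V" and X: "X = V ** diag (\<lambda>i. complex_of_real (x i)) ** adjoint V"
    using hermitian_unitary_diagonalization[OF assms] by blast
  define p where "p i = (if 0 \<le> x i then 1 else 0 :: real)" for i
  define P where "P = V ** diag (\<lambda>i. complex_of_real (p i)) ** adjoint V"
  have "hermitian P"
    by (simp add: P_def hermitian_unitary_diag)
  moreover have "P ** P = P"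
  proof -
    have "(\<lambda>i. complex_of_real (p i) * complex_of_real (p i)) = (\<lambda>i. complex_of_real (p i))"
      by (simp add: p_def fun_eq_iff)
    then show ?thesis
      by (simp add: P_def unitary_conj_mult[OF \<open>unitary V\<close>] diag_mult)
  qed
  moreover have "trace_norm X = Re (2 * trace (X ** P) - trace X)"
  proof -
    have "trace (X ** P) = (\<Sum>i\<in>UNIV. complex_of_real (x i) * complex_of_real (p i))"
      by (simp add: X P_def unitary_conj_mult[OF \<open>unitary V\<close>] diag_mult
          trace_unitary_conj[OF \<open>unitary V\<close>] trace_diag)
    moreover have "trace X = (\<Sum>i\<in>UNIV. complex_of_real (x i))"
      by (simp add: X trace_unitary_conj[OF \<open>unitary V\<close>] trace_diag)
    ultimately have "Re (2 * trace (X ** P) - trace X) = (\<Sum>i\<in>UNIV. 2 * (x i * p i) - x i)"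
      by (simp add: Re_sum sum_subtractf sum_distrib_left)
    also have "\<dots> = (\<Sum>i\<in>UNIV. \<bar>x i\<bar>)"
      by (intro sum.cong refl) (simp add: p_def)
    finally show ?thesis
      by (simp add: X trace_norm_unitary_diag[OF \<open>unitary V\<close>])
  qed
  ultimately show ?thesis
    using that by blast
qed

section \<open>The scalar kernel of the matrix quotient\<close>

definition quotient_kernel :: "real \<Rightarrow> real \<Rightarrow> real" where
  "quotient_kernel a b = integral {0<..} (\<lambda>l. 1 / ((l + a) * (l + b)))"

lemma quotient_kernel_commute: "quotient_kernel a b = quotient_kernel b a"
  by (simp add: quotient_kernel_def mult.commute)

lemma has_integral_inverse_square_shift_interval:
  fixes m y :: real
  assumes "0 < m" "0 \<le> y"
  shows "((\<lambda>l. 1 / (l + m)\<^sup>2) has_integral 1 / m - 1 / (y + m)) {0..y}"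
proof -
  have "((\<lambda>l. 1 / (l + m)\<^sup>2) has_integral (- 1 / (y + m)) - (- 1 / (0 + m))) {0..y}"
  proof (rule fundamental_theorem_of_calculus[OF assms(2)])
    fix x
    assume "x \<in> {0..y}"
    then have "x + m \<noteq> 0"
      using assms by auto
    then show "((\<lambda>l. - 1 / (l + m)) has_vector_derivative 1 / (x + m)\<^sup>2) (at x within {0..y})"
      unfolding has_real_derivative_iff_has_vector_derivative[symmetric]
      by (auto intro!: derivative_eq_intros simp: power2_eq_square field_simps)
  qed
  then show ?thesis
    by simp
qed

lemma has_integral_inverse_square_shift:
  fixes m :: real
  assumes m: "0 < m"
  shows "((\<lambda>l. 1 / (l + m)\<^sup>2) has_integral 1 / m) {0<..}"
proof -
  have "((\<lambda>l. 1 / (l + m)\<^sup>2) has_integral 1 / m) {0..}"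
  proof (rule has_integral_to_inf)
    fix y :: real
    show "(\<lambda>l. 1 / (l + m)\<^sup>2) integrable_on {0..y}"
      using m by (intro integrable_continuous_interval continuous_intros) auto
  next
    fix y :: real
    assume "0 \<le> y"
    then show "0 \<le> 1 / (y + m)\<^sup>2"
      by simp
  next
    have "\<forall>\<^sub>F y in at_top. integral {0..y} (\<lambda>l. 1 / (l + m)\<^sup>2) = 1 / m - 1 / (y + m)"
      using has_integral_inverse_square_shift_interval[OF m]
      by (intro eventually_at_top_linorderI[of 0]) (simp add: integral_unique)
    moreover have "filterlim (\<lambda>y. y + m) at_top at_top"
      using filterlim_tendsto_add_at_top[OF tendsto_const[of m] filterlim_ident] by (simp add: add.commute)
    then have "((\<lambda>y. 1 / (y + m)) \<longlongrightarrow> 0) at_top"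
      by (intro tendsto_divide_0[OF tendsto_const] filterlim_at_top_imp_at_infinity)
    then have "((\<lambda>y. 1 / m - 1 / (y + m)) \<longlongrightarrow> 1 / m - 0) at_top"
      by (intro tendsto_intros)
    ultimately show "((\<lambda>y. integral {0..y} (\<lambda>l. 1 / (l + m)\<^sup>2)) \<longlongrightarrow> 1 / m) at_top"
      by (simp add: tendsto_cong)
  qed
  moreover have "negligible {x \<in> {0..} - {0<..}. 1 / (x + m)\<^sup>2 \<noteq> (0::real)}"
    by (rule negligible_subset[of "{0}"]) auto
  moreover have "negligible {x \<in> {0<..} - {0..}. 1 / (x + m)\<^sup>2 \<noteq> (0::real)}"
    by (rule negligible_subset[of "{}"]) auto
  ultimately show ?thesis
    using has_integral_spike_set_eq[of "{0..}" "{0<..}" "\<lambda>l. 1 / (l + m)\<^sup>2"] by blast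
qed

lemma quotient_kernel_integrable:
  fixes a b :: real
  assumes a: "0 < a" and b: "0 < b"
  shows "(\<lambda>l. 1 / ((l + a) * (l + b))) integrable_on {0<..}"
proof (rule measurable_bounded_by_integrable_imp_integrable_real)
  define m where "m = min a b"
  have m: "0 < m"
    using a b by (simp add: m_def)
  show "(\<lambda>l. 1 / ((l + a) * (l + b))) \<in> borel_measurable (lebesgue_on {0<..})"
    by (rule continuous_imp_measurable_on_sets_lebesgue) (use a b in \<open>auto intro!: continuous_intros\<close>)
  show "(\<lambda>l. 1 / (l + m)\<^sup>2) integrable_on {0<..}"
    using has_integral_inverse_square_shift[OF m] by blast
  show "{0<..} \<in> sets (lebesgue :: real measure)"
    by simp
  fix l :: real
  assume "l \<in> {0<..}"
  then have l: "0 < l"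
    by simp
  have "(l + m)\<^sup>2 \<le> (l + a) * (l + b)"
    unfolding power2_eq_square using l m by (intro mult_mono) (auto simp: m_def)
  moreover have "0 < (l + m)\<^sup>2" "0 < (l + a) * (l + b)"
    using l m a b by simp_all
  ultimately show "\<bar>1 / ((l + a) * (l + b))\<bar> \<le> 1 / (l + m)\<^sup>2"
    by (simp add: frac_le)
qed

lemma quotient_kernel_has_integral:
  "0 < a \<Longrightarrow> 0 < b \<Longrightarrow> ((\<lambda>l. 1 / ((l + a) * (l + b))) has_integral quotient_kernel a b) {0<..}"
  unfolding quotient_kernel_def by (intro integrable_integral quotient_kernel_integrable)

lemma quotient_kernel_same:
  assumes "0 < a"
  shows "quotient_kernel a a = 1 / a"
  using integral_unique[OF has_integral_inverse_square_shift[OF assms]]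
  by (simp add: quotient_kernel_def power2_eq_square)

text \<open>Pointwise \<open>(l + a) (l + b) \<le> (l + (a + b) / 2)\<^sup>2\<close>: the kernel dominates the one with both
  arguments replaced by their mean.\<close>

lemma quotient_kernel_ge:
  assumes "0 < a" "0 < b"
  shows "2 / (a + b) \<le> quotient_kernel a b"
proof -
  define m where "m = (a + b) / 2"
  have "0 < m"
    using assms by (simp add: m_def)
  have "2 / (a + b) = integral {0<..} (\<lambda>l. 1 / (l + m)\<^sup>2)"
    using integral_unique[OF has_integral_inverse_square_shift[OF \<open>0 < m\<close>]] by (simp add: m_def)
  also have "\<dots> \<le> quotient_kernel a b"
    unfolding quotient_kernel_def
  proof (rule integral_le)
    show "(\<lambda>l. 1 / (l + m)\<^sup>2) integrable_on {0<..}"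
      using has_integral_inverse_square_shift[OF \<open>0 < m\<close>] by blast
    show "(\<lambda>l. 1 / ((l + a) * (l + b))) integrable_on {0<..}"
      by (rule quotient_kernel_integrable[OF assms])
    fix l :: real
    assume "l \<in> {0<..}"
    then have l: "0 < l"
      by simp
    have "(l + m)\<^sup>2 - (l + a) * (l + b) = ((a - b) / 2)\<^sup>2"
      by (simp add: m_def power2_eq_square field_simps)
    then have "(l + a) * (l + b) \<le> (l + m)\<^sup>2"
      by (metis diff_ge_0_iff_ge zero_le_power2)
    moreover have "0 < (l + a) * (l + b)" "0 < (l + m)\<^sup>2"
      using l assms \<open>0 < m\<close> by simp_all
    ultimately show "1 / (l + m)\<^sup>2 \<le> 1 / ((l + a) * (l + b))"
      by (simp add: frac_le)
  qed
  finally show ?thesis .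
qed

section \<open>The matrix quotient in an eigenbasis of the denominator\<close>

definition diag_quotient :: "complex^'n^'n \<Rightarrow> ('n \<Rightarrow> real) \<Rightarrow> complex^'n^'n" where
  "diag_quotient B c = (\<chi> i j. complex_of_real (quotient_kernel (c i) (c j)) * B $ i $ j)"

lemma norm_axis: "norm (axis i x) = norm x"
proof -
  have "(norm (axis i x $ k))\<^sup>2 = (if k = i then (norm x)\<^sup>2 else 0)" for k
    by (simp add: axis_def)
  then show ?thesis
    by (simp add: norm_vec_def L2_set_def sum.delta)
qed

lemma bounded_linear_axis: "bounded_linear (axis i :: 'a::real_normed_vector \<Rightarrow> 'a^'n)"
proof (rule bounded_linear_intro[of _ 1])
  show "axis i (x + y) = axis i x + axis i y" for x y :: 'a
    by (simp add: vec_eq_iff axis_def)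
  show "axis i (r *\<^sub>R x) = r *\<^sub>R axis i x" for r and x :: 'a
    by (simp add: vec_eq_iff axis_def)
  show "norm (axis i x :: 'a^'n) \<le> norm x * 1" for x :: 'a
    by (simp add: norm_axis)
qed

lemma has_integral_vec_lambda:
  fixes f :: "'a::euclidean_space \<Rightarrow> 'i::finite \<Rightarrow> 'b::real_normed_vector"
  assumes "\<And>i. ((\<lambda>x. f x i) has_integral y i) S"
  shows "((\<lambda>x. \<chi> i. f x i) has_integral (\<chi> i. y i)) S"
proof -
  have vec_sum_axis: "(\<chi> i. g i) = (\<Sum>i\<in>UNIV. axis i (g i))" for g :: "'i \<Rightarrow> 'b"
    by (simp add: vec_eq_iff sum_component axis_def)
  have "((\<lambda>x. \<Sum>i\<in>UNIV. axis i (f x i)) has_integral (\<Sum>i\<in>UNIV. axis i (y i))) S"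
    using has_integral_linear[OF assms bounded_linear_axis] by (intro has_integral_sum) (simp_all add: o_def)
  then show ?thesis
    by (simp only: vec_sum_axis)
qed

lemma diag_sandwich: "diag r ** X ** diag s = (\<chi> i j. r i * X $ i $ j * s j)"
proof -
  have "(diag r ** X) $ i $ k = r i * X $ i $ k" for i k
    by (simp add: matrix_matrix_mult_def if_distrib[where f="\<lambda>x. x * _"] sum.delta cong: if_cong)
  then show ?thesis
    by (simp add: vec_eq_iff matrix_matrix_mult_def[of _ "diag s"] if_distrib[where f="\<lambda>x. _ * x"]
        sum.delta' cong: if_cong)
qed

lemma has_integral_diag_resolvent_sandwich:
  fixes B :: "complex^'n^'n"
  assumes support: "\<And>i j. B $ i $ j \<noteq> 0 \<Longrightarrow> 0 < c i \<and> 0 < c j"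
  shows "((\<lambda>l. diag (\<lambda>i. complex_of_real (1 / (l + c i))) ** B ** diag (\<lambda>i. complex_of_real (1 / (l + c i))))
    has_integral diag_quotient B c) {0<..}"
proof -
  have "((\<lambda>l. complex_of_real (1 / ((l + c i) * (l + c j))) * B $ i $ j)
      has_integral complex_of_real (quotient_kernel (c i) (c j)) * B $ i $ j) {0<..}" for i j
  proof (cases "B $ i $ j = 0")
    case True
    then show ?thesis
      by simp
  next
    case False
    then have "((\<lambda>l. 1 / ((l + c i) * (l + c j))) has_integral quotient_kernel (c i) (c j)) {0<..}"
      using support quotient_kernel_has_integral by blast
    from has_integral_scaleR_left[OF this, of "B $ i $ j"] show ?thesis
      by (simp only: scaleR_conv_of_real)
  qed
  then have "((\<lambda>l. \<chi> i j. complex_of_real (1 / ((l + c i) * (l + c j))) * B $ i $ j)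
      has_integral diag_quotient B c) {0<..}"
    unfolding diag_quotient_def by (intro has_integral_vec_lambda)
  then show ?thesis
    by (simp add: diag_sandwich mult.commute mult.left_commute)
qed

lemma matrix_inv_unique:
  fixes M N :: "'a::field^'n^'n"
  assumes "M ** N = mat 1"
  shows "matrix_inv M = N"
proof -
  have "M ** N = mat 1 \<and> N ** M = mat 1"
    using assms matrix_left_right_inverse by blast
  then have inverse: "M ** matrix_inv M = mat 1 \<and> matrix_inv M ** M = mat 1"
    unfolding matrix_inv_def by (rule someI)
  have "matrix_inv M = matrix_inv M ** (M ** N)"
    using assms by simp
  also have "\<dots> = N"
    using inverse by (simp add: matrix_mul_assoc)
  finally show ?thesis .
qed

lemma diag_const: "diag (\<lambda>i. c) = mat c"
  by (simp add: vec_eq_iff mat_def)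

lemma mat_matrix_mul_commute: "mat c ** (A::'a::comm_semiring_1^'n^'n) = A ** mat c"
  by (simp add: vec_eq_iff matrix_matrix_mult_def mat_def if_distrib if_distribR sum.delta sum.delta'
      mult.commute cong: if_cong)

lemma matrix_inv_unitary_diag:
  assumes "unitary U" "\<forall>i. d i \<noteq> 0"
  shows "matrix_inv (U ** diag d ** adjoint U) = U ** diag (\<lambda>i. inverse (d i)) ** adjoint U"
  using assms
  by (intro matrix_inv_unique) (simp add: unitary_conj_mult diag_mult diag_const unitary_right_inverse)

lemma mat_add_unitary_diag:
  assumes "unitary U"
  shows "mat c + U ** diag d ** adjoint U = U ** diag (\<lambda>i. c + d i) ** adjoint U"
proof -
  have "U ** mat c ** adjoint U = mat c ** U ** adjoint U"
    by (simp only: mat_matrix_mul_commute)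
  also have "\<dots> = mat c"
    using assms by (simp add: matrix_mul_assoc[symmetric] unitary_right_inverse)
  finally have "U ** mat c ** adjoint U = mat c" .
  moreover have "diag (\<lambda>i. c + d i) = mat c + diag d"
    by (simp add: vec_eq_iff mat_def)
  ultimately show ?thesis
    by (simp add: matrix_add_ldistrib matrix_add_rdistrib)
qed

lemma bounded_linear_sandwich: "bounded_linear (\<lambda>M::complex^'n^'n. U ** M ** V)"
proof -
  have "linear (\<lambda>M::complex^'n^'n. U ** M ** V)"
    by (rule linearI) (simp_all add: matrix_add_ldistrib matrix_add_rdistrib matrix_scalar_ac
        scalar_matrix_assoc[symmetric])
  then show ?thesis
    using linear_conv_bounded_linear by blast
qed

lemma matrix_quotient_unitary_diag:
  assumes "unitary U" and nonneg: "\<forall>i. 0 \<le> c i"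
    and support: "\<And>i j. B $ i $ j \<noteq> 0 \<Longrightarrow> 0 < c i \<and> 0 < c j"
  shows "matrix_quotient (U ** B ** adjoint U) (U ** diag (\<lambda>i. complex_of_real (c i)) ** adjoint U)
    = U ** diag_quotient B c ** adjoint U"
proof -
  define R where "R l = diag (\<lambda>i. complex_of_real (1 / (l + c i)))" for l :: real
  have "matrix_inv (mat (complex_of_real l) + U ** diag (\<lambda>i. complex_of_real (c i)) ** adjoint U)
      = U ** R l ** adjoint U" if "0 < l" for l
  proof -
    have "complex_of_real l + complex_of_real (c i) \<noteq> 0" for i
      using that nonneg by (metis add_pos_nonneg of_real_add of_real_eq_0_iff order_less_irrefl)
    then show ?thesis
      using \<open>unitary U\<close> by (simp add: mat_add_unitary_diag matrix_inv_unitary_diag R_def inverse_eq_divide)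
  qed
  then have integrand: "matrix_inv (mat (complex_of_real l) + U ** diag (\<lambda>i. complex_of_real (c i)) ** adjoint U)
      ** (U ** B ** adjoint U)
      ** matrix_inv (mat (complex_of_real l) + U ** diag (\<lambda>i. complex_of_real (c i)) ** adjoint U)
    = U ** (R l ** B ** R l) ** adjoint U" if "l \<in> {0<..}" for l
    using that by (simp add: unitary_conj_mult[OF \<open>unitary U\<close>])
  have "matrix_quotient (U ** B ** adjoint U) (U ** diag (\<lambda>i. complex_of_real (c i)) ** adjoint U)
      = integral {0<..} (\<lambda>l. U ** (R l ** B ** R l) ** adjoint U)"
    unfolding matrix_quotient_def by (rule integral_cong[OF integrand])
  also have "\<dots> = U ** diag_quotient B c ** adjoint U"
    using has_integral_linear[OF has_integral_diag_resolvent_sandwich[OF support] bounded_linear_sandwich]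
    by (intro integral_unique) (simp add: o_def R_def)
  finally show ?thesis .
qed

section \<open>The inequality in an eigenbasis of the sum\<close>

lemma psd_sum_diag_nonneg:
  assumes "psd A" "psd B" "A + B = diag (\<lambda>i. complex_of_real (c i))"
  shows "0 \<le> c i"
proof -
  have "Re (A $ i $ i) + Re (B $ i $ i) = c i"
    using arg_cong[OF assms(3), of "\<lambda>M. Re (M $ i $ i)"] by simp
  then show ?thesis
    using psd_diag_nonneg[OF assms(1), of i] psd_diag_nonneg[OF assms(2), of i] by linarith
qed

lemma psd_sum_diag_eq_0:
  assumes "psd A" "psd B" "A + B = diag (\<lambda>i. complex_of_real (c i))" "c i = 0"
  shows "A $ i $ j = 0" "A $ j $ i = 0" "B $ i $ j = 0" "B $ j $ i = 0"
proof -
  have "Re (A $ i $ i) + Re (B $ i $ i) = 0"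
    using arg_cong[OF assms(3), of "\<lambda>M. Re (M $ i $ i)"] assms(4) by simp
  then have "Re (A $ i $ i) = 0" "Re (B $ i $ i) = 0"
    using psd_diag_nonneg[OF assms(1), of i] psd_diag_nonneg[OF assms(2), of i] by linarith+
  then show "A $ i $ j = 0" "A $ j $ i = 0" "B $ i $ j = 0" "B $ j $ i = 0"
    using psd_diag_eq_0[OF assms(1)] psd_diag_eq_0[OF assms(2)] by blast+
qed

lemma hermitian_idempotent_diag:
  assumes "hermitian P" "P ** P = P"
  shows "P $ i $ i = complex_of_real (\<Sum>k\<in>UNIV. (cmod (P $ i $ k))\<^sup>2)"
proof -
  have "P $ i $ i = (\<Sum>k\<in>UNIV. P $ i $ k * P $ k $ i)"
    using arg_cong[OF assms(2), of "\<lambda>M. M $ i $ i"] by (simp add: matrix_matrix_mult_def)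
  also have "\<dots> = (\<Sum>k\<in>UNIV. complex_of_real ((cmod (P $ i $ k))\<^sup>2))"
    by (intro sum.cong refl) (metis hermitian_nth[OF assms(1)] complex_norm_square)
  finally show ?thesis
    by simp
qed

lemma cross_term_le:
  fixes \<alpha> \<pi> :: complex
  assumes "0 < s" "2 / s \<le> K"
  shows "2 * Re (\<alpha> * cnj \<pi>) \<le> (cmod \<alpha>)\<^sup>2 * K + s / 2 * (cmod \<pi>)\<^sup>2"
proof -
  have "Re (\<alpha> * cnj \<pi>) \<le> cmod \<alpha> * cmod \<pi>"
    by (metis complex_Re_le_cmod complex_mod_cnj norm_mult)
  moreover have "(cmod \<alpha>)\<^sup>2 * (2 / s) \<le> (cmod \<alpha>)\<^sup>2 * K"
    using assms(2) by (intro mult_left_mono) auto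
  moreover have "(cmod \<alpha>)\<^sup>2 * (2 / s) + s / 2 * (cmod \<pi>)\<^sup>2 - 2 * (cmod \<alpha> * cmod \<pi>)
      = (2 * cmod \<alpha> - s * cmod \<pi>)\<^sup>2 / (2 * s)"
    using assms(1) by (simp add: field_simps power2_eq_square)
  moreover have "0 \<le> (2 * cmod \<alpha> - s * cmod \<pi>)\<^sup>2 / (2 * s)"
    using assms(1) by simp
  ultimately show ?thesis
    by linarith
qed

lemma sum_diag_nth:
  assumes "A + B = diag (\<lambda>i. complex_of_real (c i))"
  shows "B $ i $ k = (if i = k then complex_of_real (c i) else 0) - A $ i $ k"
  using arg_cong[OF assms, of "\<lambda>M. M $ i $ k"] by (simp add: algebra_simps)

lemma diag_quotient_trace_term:
  assumes "psd A" "psd B" and sum_diag: "A + B = diag (\<lambda>i. complex_of_real (c i))"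
  shows "A $ i $ k * diag_quotient B c $ k $ i
    = (if i = k then complex_of_real (Re (A $ i $ i)) else 0)
      - complex_of_real ((cmod (A $ i $ k))\<^sup>2 * quotient_kernel (c i) (c k))"
proof (cases "i = k")
  case True
  have "Im (A $ i $ i) = 0"
    using arg_cong[OF hermitian_nth[OF psd_hermitian[OF assms(1)], of i i], of Im] by simp
  define r where "r = Re (A $ i $ i)"
  have r: "A $ i $ i = complex_of_real r"
    using \<open>Im (A $ i $ i) = 0\<close> by (simp add: r_def complex_eq_iff)
  have "A $ i $ i * diag_quotient B c $ i $ i
      = complex_of_real r - complex_of_real (r\<^sup>2 * quotient_kernel (c i) (c i))"
  proof (cases "c i = 0")
    case True
    then show ?thesis
      using psd_sum_diag_eq_0[OF assms True] r by simp
  next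
    case False
    then have "0 < c i"
      using psd_sum_diag_nonneg[OF assms, of i] by simp
    then show ?thesis
      by (simp add: diag_quotient_def sum_diag_nth[OF sum_diag] r quotient_kernel_same field_simps
          power2_eq_square)
  qed
  then show ?thesis
    using True r by simp
next
  case False
  then have "diag_quotient B c $ k $ i = - (complex_of_real (quotient_kernel (c i) (c k)) * cnj (A $ i $ k))"
    using hermitian_nth[OF psd_hermitian[OF assms(1)], of k i]
    by (simp add: diag_quotient_def sum_diag_nth[OF sum_diag] quotient_kernel_commute[of "c k"])
  then have "A $ i $ k * diag_quotient B c $ k $ i
      = - (complex_of_real (quotient_kernel (c i) (c k)) * (A $ i $ k * cnj (A $ i $ k)))"
    by (simp only: mult_minus_right mult.left_commute)
  also have "A $ i $ k * cnj (A $ i $ k) = complex_of_real ((cmod (A $ i $ k))\<^sup>2)"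
    by (rule complex_norm_square[symmetric])
  finally show ?thesis
    using False by (simp add: mult.commute)
qed

lemma trace_diag_quotient_eq:
  assumes "psd A" "psd B" "A + B = diag (\<lambda>i. complex_of_real (c i))"
  shows "trace (A ** diag_quotient B c) = complex_of_real ((\<Sum>i\<in>UNIV. Re (A $ i $ i))
    - (\<Sum>i\<in>UNIV. \<Sum>k\<in>UNIV. (cmod (A $ i $ k))\<^sup>2 * quotient_kernel (c i) (c k)))"
  by (simp add: trace_matrix_mul diag_quotient_trace_term[OF assms] sum_subtractf sum.delta')

lemma sum_symmetrise_weights:
  fixes c :: "'i::finite \<Rightarrow> real"
  assumes "\<And>i k. x k i = x i k"
  shows "(\<Sum>i\<in>UNIV. c i * (\<Sum>k\<in>UNIV. x i k)) = (\<Sum>i\<in>UNIV. \<Sum>k\<in>UNIV. (c i + c k) / 2 * x i k)"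
proof -
  have swap: "(\<Sum>i\<in>UNIV. \<Sum>k\<in>UNIV. c k * x i k) = (\<Sum>i\<in>UNIV. \<Sum>k\<in>UNIV. c i * x i k)"
    by (subst sum.swap) (simp add: assms)
  have "(\<Sum>i\<in>UNIV. \<Sum>k\<in>UNIV. (c i + c k) / 2 * x i k)
      = ((\<Sum>i\<in>UNIV. \<Sum>k\<in>UNIV. c i * x i k) + (\<Sum>i\<in>UNIV. \<Sum>k\<in>UNIV. c k * x i k)) / 2"
    by (simp add: sum.distrib[symmetric] sum_divide_distrib add_divide_distrib ring_distribs)
  also have "\<dots> = (\<Sum>i\<in>UNIV. \<Sum>k\<in>UNIV. c i * x i k)"
    by (simp only: swap) simp
  also have "\<dots> = (\<Sum>i\<in>UNIV. c i * (\<Sum>k\<in>UNIV. x i k))"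
    by (simp add: sum_distrib_left)
  finally show ?thesis
    by (rule sym)
qed

text \<open>The weight \<open>(c i + c k) / 2\<close>, obtained by symmetrising with \<open>|P i k| = |P k i|\<close>, is the
  one \<open>cross_term_le\<close> needs.\<close>

lemma Re_trace_projection_diag:
  assumes "hermitian A" and sum_diag: "A + B = diag (\<lambda>i. complex_of_real (c i))"
    and "hermitian P" "P ** P = P"
  shows "(sum c UNIV - Re (2 * trace ((A - B) ** P) - trace (A - B))) / 2
    = (\<Sum>i\<in>UNIV. Re (A $ i $ i)) - 2 * (\<Sum>i\<in>UNIV. \<Sum>k\<in>UNIV. Re (A $ i $ k * cnj (P $ i $ k)))
      + (\<Sum>i\<in>UNIV. \<Sum>k\<in>UNIV. (c i + c k) / 2 * (cmod (P $ i $ k))\<^sup>2)"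
proof -
  note B = sum_diag_nth[OF sum_diag]
  have "Re (trace ((A - B) ** P))
      = 2 * (\<Sum>i\<in>UNIV. \<Sum>k\<in>UNIV. Re (A $ i $ k * cnj (P $ i $ k)))
        - (\<Sum>i\<in>UNIV. c i * (\<Sum>k\<in>UNIV. (cmod (P $ i $ k))\<^sup>2))"
  proof -
    have "(A $ i $ k - B $ i $ k) * P $ k $ i
        = 2 * (A $ i $ k * cnj (P $ i $ k)) - (if i = k then complex_of_real (c i) * P $ i $ i else 0)"
      for i k
    proof (cases "i = k")
      case True
      have "cnj (P $ i $ i) = P $ i $ i"
        using hermitian_nth[OF \<open>hermitian P\<close>, of i i] by simp
      then show ?thesis
        using True by (simp add: B algebra_simps)
    next
      case False
      then show ?thesis
        using hermitian_nth[OF \<open>hermitian P\<close>, of k i] by (simp add: B algebra_simps)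
    qed
    then show ?thesis
      by (simp add: trace_matrix_mul sum_subtractf sum.delta' sum_distrib_left Re_sum
          hermitian_idempotent_diag[OF assms(3,4)])
  qed
  moreover have "Re (trace (A - B)) = 2 * (\<Sum>i\<in>UNIV. Re (A $ i $ i)) - sum c UNIV"
    by (simp add: trace_def B Re_sum sum_subtractf sum_distrib_left)
  moreover have "cmod (P $ k $ i) = cmod (P $ i $ k)" for i k
    using hermitian_nth[OF \<open>hermitian P\<close>, of k i] by simp
  ultimately show ?thesis
    using sum_symmetrise_weights[of "\<lambda>i k. (cmod (P $ i $ k))\<^sup>2" c] by simp
qed

lemma trace_diag_quotient_le:
  assumes "psd A" "psd B" and sum_diag: "A + B = diag (\<lambda>i. complex_of_real (c i))"
    and "hermitian P" "P ** P = P"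
  shows "trace (A ** diag_quotient B c)
    \<le> complex_of_real ((sum c UNIV - Re (2 * trace ((A - B) ** P) - trace (A - B))) / 2)"
proof -
  have bound: "2 * Re (A $ i $ k * cnj (P $ i $ k))
      \<le> (cmod (A $ i $ k))\<^sup>2 * quotient_kernel (c i) (c k) + (c i + c k) / 2 * (cmod (P $ i $ k))\<^sup>2"
    for i k
  proof (cases "A $ i $ k = 0")
    case True
    then show ?thesis
      using psd_sum_diag_nonneg[OF assms(1-3)] by (simp add: add_nonneg_nonneg)
  next
    case False
    then have "0 < c i" "0 < c k"
      using psd_sum_diag_nonneg[OF assms(1-3)] psd_sum_diag_eq_0[OF assms(1-3)]
      by (metis order_le_neq_trans)+
    then show ?thesis
      by (intro cross_term_le quotient_kernel_ge) simp_all
  qed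
  have "(\<Sum>i\<in>UNIV. \<Sum>k\<in>UNIV. 2 * Re (A $ i $ k * cnj (P $ i $ k)))
      \<le> (\<Sum>i\<in>UNIV. \<Sum>k\<in>UNIV. (cmod (A $ i $ k))\<^sup>2 * quotient_kernel (c i) (c k)
          + (c i + c k) / 2 * (cmod (P $ i $ k))\<^sup>2)"
    by (intro sum_mono bound)
  then show ?thesis
    unfolding trace_diag_quotient_eq[OF assms(1-3)]
      Re_trace_projection_diag[OF psd_hermitian[OF assms(1)] sum_diag assms(4,5)]
    by (simp add: less_eq_complex_def sum_distrib_left sum.distrib)
qed

lemma unitary_conj_sum_diag:
  assumes "unitary U" "A + B = U ** diag (\<lambda>i. complex_of_real (c i)) ** adjoint U"
  shows "adjoint U ** A ** U + adjoint U ** B ** U = diag (\<lambda>i. complex_of_real (c i))"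
proof -
  have "adjoint U ** A ** U + adjoint U ** B ** U = adjoint U ** (A + B) ** U"
    by (simp add: matrix_add_ldistrib matrix_add_rdistrib)
  then show ?thesis
    by (simp add: assms(2) unitary_conj_cancel[OF assms(1)])
qed

lemma matrix_quotient_psd_sum:
  assumes "psd A" "psd B" "unitary U"
    and sum_eq: "A + B = U ** diag (\<lambda>i. complex_of_real (c i)) ** adjoint U"
  shows "matrix_quotient B (A + B) = U ** diag_quotient (adjoint U ** B ** U) c ** adjoint U"
proof -
  note sum_diag = unitary_conj_sum_diag[OF assms(3) sum_eq]
  note psd' = assms(1,2)[THEN psd_adjoint_conj[of _ U]]
  have "B = U ** (adjoint U ** B ** U) ** adjoint U"
    using unitary_conj_cancel[OF unitary_adjoint[OF \<open>unitary U\<close>], of B] by simp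
  moreover have "0 < c i \<and> 0 < c j" if "(adjoint U ** B ** U) $ i $ j \<noteq> 0" for i j
    using that psd_sum_diag_nonneg[OF psd' sum_diag] psd_sum_diag_eq_0[OF psd' sum_diag]
    by (metis order_le_neq_trans)
  ultimately show ?thesis
    using matrix_quotient_unitary_diag[OF \<open>unitary U\<close>, of c "adjoint U ** B ** U"]
      psd_sum_diag_nonneg[OF psd' sum_diag] sum_eq
    by simp
qed

theorem mainTheorem4:
  fixes A B :: "complex^'n^'n"
  assumes "psd A" and "psd B"
  shows "trace (A ** matrix_quotient B (A + B))
           \<le> complex_of_real ((Re (trace (A + B)) - trace_norm (A - B)) / 2)"
proof -
  obtain U c where "unitary U" and sum_eq: "A + B = U ** diag (\<lambda>i. complex_of_real (c i)) ** adjoint U"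
    using hermitian_unitary_diagonalization[OF psd_hermitian[OF psd_add[OF assms]]] by blast
  obtain P where "hermitian P" "P ** P = P"
    and trace_norm: "trace_norm (A - B) = Re (2 * trace ((A - B) ** P) - trace (A - B))"
    using trace_norm_eq_projection[OF hermitian_diff[OF assms[THEN psd_hermitian]]] by blast
  define A' B' P' where "A' = adjoint U ** A ** U" and "B' = adjoint U ** B ** U"
    and "P' = adjoint U ** P ** U"
  have to_basis: "unitary (adjoint U)"
    using unitary_adjoint[OF \<open>unitary U\<close>] .
  have "trace (A ** matrix_quotient B (A + B)) = trace (A' ** diag_quotient B' c)"
    unfolding matrix_quotient_psd_sum[OF assms \<open>unitary U\<close> sum_eq]
    by (metis A'_def B'_def matrix_mul_assoc trace_mul_sym)
  also have "\<dots> \<le> complex_of_real ((sum c UNIV - Re (2 * trace ((A' - B') ** P') - trace (A' - B'))) / 2)"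
    using \<open>hermitian P\<close> \<open>P ** P = P\<close> unitary_conj_mult[OF to_basis, of P P]
      unitary_conj_sum_diag[OF \<open>unitary U\<close> sum_eq] assms[THEN psd_adjoint_conj[of _ U]]
    by (intro trace_diag_quotient_le) (simp_all add: A'_def B'_def P'_def hermitian_adjoint_conj)
  also have "\<dots> = complex_of_real ((Re (trace (A + B)) - trace_norm (A - B)) / 2)"
    using unitary_conj_mult[OF to_basis, of "A - B" P] trace_unitary_conj[OF to_basis]
      trace_unitary_conj[OF \<open>unitary U\<close>]
    by (simp add: A'_def B'_def P'_def trace_norm sum_eq trace_diag matrix_diff_ldistrib
        matrix_diff_rdistrib trace_sub Re_sum)
  finally show ?thesis .
qed

end
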